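(* Let $\rho^s$ be a qubit state on $\mathbb{C}^2$ with $l_1$-norm coherence $\mathcal{C}_{l_1}(\rho^s)>\sqrt{1/2}$, and let $A$, $B$ be auxiliary qubits each prepared in $|0\rangle\langle 0|$. Then there exists an incoherent operation $\Lambda$ on $(\mathbb{C}^2)^{\otimes 3}$ such that $\Lambda(\rho^s\otimes|0\rangle\langle 0|^A\otimes|0\rangle\langle 0|^B)$ is a genuinely three-qubit nonlocal state.
   Context: Coherence is with respect to the computational basis; $\mathcal{C}_{l_1}(\rho)=\sum_{i\neq j}|\rho_{ij}|$. An incoherent operation is a completely positive trace-preserving map $\Lambda(\rho)=\sum_j K_j\rho K_j^\dagger$ whose Kraus operators map states diagonal in the computational basis to (unnormalized) diagonal states. For measurements $X,Y,Z$ by three parties with outcomes $x,y,z$, the correlations are Svetlichny local if $P(xyz|XYZ)=\sum_\lambda q_\lambda P_\lambda(xy|XY)P_\lambda(z|Z)+\sum_\mu q_\mu P_\mu(xz|XZ)P_\mu(y|Y)+\sum_\nu q_\nu P_\nu(yz|YZ)P_\nu(x|X)$ with $q_\lambda,q_\mu,q_\nu\geq 0$ summing to $1$. A three-qubit state is genuinely three-qubit nonlocal if for some choice of local measurements its correlations are not Svetlichny local. *)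

theory Defs
  imports Complex_Main
begin

text \<open>Finite-dimensional complex matrices are represented as functions
  nat => nat => complex; only entries with indices below the dimension n matter.
  Multi-qubit computational basis: index i of a tensor product of a d1- and a
  d2-dimensional system is (i div d2, i mod d2), i.e. the first factor is the most
  significant.\<close>

type_synonym cmat = "nat \<Rightarrow> nat \<Rightarrow> complex"

definition mmult :: "nat \<Rightarrow> cmat \<Rightarrow> cmat \<Rightarrow> cmat" where
  "mmult n A B = (\<lambda>i j. \<Sum>k<n. A i k * B k j)"

definition adj :: "cmat \<Rightarrow> cmat" where
  "adj A = (\<lambda>i j. cnj (A j i))"

definition idm :: cmat where
  "idm = (\<lambda>i j. if i = j then 1 else 0)"

definition mtrace :: "nat \<Rightarrow> cmat \<Rightarrow> complex" where
  "mtrace n A = (\<Sum>i<n. A i i)"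

definition kron :: "nat \<Rightarrow> cmat \<Rightarrow> cmat \<Rightarrow> cmat" where
  "kron d2 A B = (\<lambda>i j. A (i div d2) (j div d2) * B (i mod d2) (j mod d2))"

definition psd :: "nat \<Rightarrow> cmat \<Rightarrow> bool" where
  "psd n A \<longleftrightarrow> (\<forall>v :: nat \<Rightarrow> complex.
     Im (\<Sum>i<n. \<Sum>j<n. cnj (v i) * A i j * v j) = 0 \<and>
     Re (\<Sum>i<n. \<Sum>j<n. cnj (v i) * A i j * v j) \<ge> 0)"

definition density :: "nat \<Rightarrow> cmat \<Rightarrow> bool" where
  "density n \<rho> \<longleftrightarrow> psd n \<rho> \<and> mtrace n \<rho> = 1"

definition is_diag :: "nat \<Rightarrow> cmat \<Rightarrow> bool" where
  "is_diag n A \<longleftrightarrow> (\<forall>i<n. \<forall>j<n. i \<noteq> j \<longrightarrow> A i j = 0)"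

definition coh_l1 :: "nat \<Rightarrow> cmat \<Rightarrow> real" where
  "coh_l1 n \<rho> = (\<Sum>i<n. \<Sum>j<n. if i \<noteq> j then cmod (\<rho> i j) else 0)"

definition ket0bra0 :: cmat where
  "ket0bra0 = (\<lambda>i j. if i = 0 \<and> j = 0 then 1 else 0)"

definition kraus_apply :: "nat \<Rightarrow> cmat list \<Rightarrow> cmat \<Rightarrow> cmat" where
  "kraus_apply n Ks \<rho> = (\<lambda>i j. \<Sum>K\<leftarrow>Ks. mmult n (mmult n K \<rho>) (adj K) i j)"

definition cptp_kraus :: "nat \<Rightarrow> cmat list \<Rightarrow> bool" where
  "cptp_kraus n Ks \<longleftrightarrow>
     (\<forall>i<n. \<forall>j<n. (\<Sum>K\<leftarrow>Ks. mmult n (adj K) K i j) = idm i j)"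

definition incoherent_kraus :: "nat \<Rightarrow> cmat list \<Rightarrow> bool" where
  "incoherent_kraus n Ks \<longleftrightarrow> cptp_kraus n Ks \<and>
     (\<forall>K\<in>set Ks. \<forall>\<sigma>. density n \<sigma> \<and> is_diag n \<sigma> \<longrightarrow>
        is_diag n (mmult n (mmult n K \<sigma>) (adj K)))"

definition qubit_povms :: "nat set \<Rightarrow> nat set \<Rightarrow> (nat \<Rightarrow> nat \<Rightarrow> cmat) \<Rightarrow> bool" where
  "qubit_povms S Os E \<longleftrightarrow> (\<forall>X\<in>S.
     (\<forall>x\<in>Os. psd 2 (E X x)) \<and>
     (\<forall>i<2. \<forall>j<2. (\<Sum>x\<in>Os. E X x i j) = idm i j))"

definition qcorr :: "cmat \<Rightarrow> (nat \<Rightarrow> nat \<Rightarrow> cmat) \<Rightarrow> (nat \<Rightarrow> nat \<Rightarrow> cmat) \<Rightarrow>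
    (nat \<Rightarrow> nat \<Rightarrow> cmat) \<Rightarrow> nat \<Rightarrow> nat \<Rightarrow> nat \<Rightarrow> nat \<Rightarrow> nat \<Rightarrow> nat \<Rightarrow> real" where
  "qcorr \<rho> E1 E2 E3 x y z X Y Z =
     Re (mtrace 8 (mmult 8 \<rho> (kron 4 (E1 X x) (kron 2 (E2 Y y) (E3 Z z)))))"

definition cdist1 :: "nat set \<Rightarrow> nat set \<Rightarrow> (nat \<Rightarrow> nat \<Rightarrow> real) \<Rightarrow> bool" where
  "cdist1 S Os p \<longleftrightarrow> (\<forall>A\<in>S. (\<forall>a\<in>Os. p a A \<ge> 0) \<and> (\<Sum>a\<in>Os. p a A) = 1)"

definition cdist2 :: "nat set \<Rightarrow> nat set \<Rightarrow> nat set \<Rightarrow> nat set \<Rightarrow>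
    (nat \<Rightarrow> nat \<Rightarrow> nat \<Rightarrow> nat \<Rightarrow> real) \<Rightarrow> bool" where
  "cdist2 SA SB OA OB p \<longleftrightarrow> (\<forall>A\<in>SA. \<forall>B\<in>SB.
     (\<forall>a\<in>OA. \<forall>b\<in>OB. p a b A B \<ge> 0) \<and> (\<Sum>a\<in>OA. \<Sum>b\<in>OB. p a b A B) = 1)"

definition svetlichny_local :: "nat set \<Rightarrow> nat set \<Rightarrow> nat set \<Rightarrow> nat set \<Rightarrow> nat set \<Rightarrow> nat set \<Rightarrow>
    (nat \<Rightarrow> nat \<Rightarrow> nat \<Rightarrow> nat \<Rightarrow> nat \<Rightarrow> nat \<Rightarrow> real) \<Rightarrow> bool" where
  "svetlichny_local SX SY SZ OX OY OZ P \<longleftrightarrow>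
    (\<exists>(n1::nat) (n2::nat) (n3::nat) (q1::nat \<Rightarrow> real) (q2::nat \<Rightarrow> real) (q3::nat \<Rightarrow> real)
      pxy pz pxz py pyz px.
      (\<forall>l<n1. q1 l \<ge> 0 \<and> cdist2 SX SY OX OY (pxy l) \<and> cdist1 SZ OZ (pz l)) \<and>
      (\<forall>m<n2. q2 m \<ge> 0 \<and> cdist2 SX SZ OX OZ (pxz m) \<and> cdist1 SY OY (py m)) \<and>
      (\<forall>k<n3. q3 k \<ge> 0 \<and> cdist2 SY SZ OY OZ (pyz k) \<and> cdist1 SX OX (px k)) \<and>
      (\<Sum>l<n1. q1 l) + (\<Sum>m<n2. q2 m) + (\<Sum>k<n3. q3 k) = 1 \<and>
      (\<forall>X\<in>SX. \<forall>Y\<in>SY. \<forall>Z\<in>SZ. \<forall>x\<in>OX. \<forall>y\<in>OY. \<forall>z\<in>OZ.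
         P x y z X Y Z =
           (\<Sum>l<n1. q1 l * pxy l x y X Y * pz l z Z) +
           (\<Sum>m<n2. q2 m * pxz m x z X Z * py m y Y) +
           (\<Sum>k<n3. q3 k * pyz k y z Y Z * px k x X)))"

definition genuinely_3q_nonlocal :: "cmat \<Rightarrow> bool" where
  "genuinely_3q_nonlocal \<rho> \<longleftrightarrow>
    (\<exists>SX SY SZ OX OY OZ E1 E2 E3.
       finite SX \<and> finite SY \<and> finite SZ \<and> finite OX \<and> finite OY \<and> finite OZ \<and>
       qubit_povms SX OX E1 \<and> qubit_povms SY OY E2 \<and> qubit_povms SZ OZ E3 \<and>
       \<not> svetlichny_local SX SY SZ OX OY OZ (qcorr \<rho> E1 E2 E3))"

end

theory Submission
  imports Defs "HOL-Combinatorics.Permutations"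
begin

(* Transposing the basis states |100> and |111> permutes the computational basis, so it is an
   incoherent operation, and it turns rho (x) |00><00| into the GHZ-type state whose only nonzero
   entries are rho_00, rho_01, rho_10, rho_11 at the corners |000>, |111>.  Measuring every qubit
   along an equatorial direction w_k of the Bloch sphere yields the correlator
   2 Re (rho_01 conj (w_A w_B w_C)); with Svetlichny's settings, rotated by the phase of rho_01,
   the Svetlichny expression takes the value 4 sqrt 2 C_l1(rho).  Every Svetlichny-local model
   keeps it at most 4: by convexity it suffices to treat a product of a two-party and a one-party
   distribution, where the bound is a CHSH-type estimate.  Hence C_l1(rho) > 1/sqrt 2 forces a
   violation. *)

lemma sum_lessThan_2: "(\<Sum>i<2. f i) = f 0 + f (1::nat)"
  by (simp add: eval_nat_numeral)

lemma sum_lessThan_8: "(\<Sum>i<8. f i) = f 0 + f 1 + f 2 + f 3 + f 4 + f 5 + f 6 + f (7::nat)"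
  by (simp add: eval_nat_numeral)

definition perm_matrix :: "(nat \<Rightarrow> nat) \<Rightarrow> cmat" where
  "perm_matrix \<pi> = (\<lambda>i j. if j = \<pi> i then 1 else 0)"

lemma adj_perm_matrix:
  assumes "\<pi> permutes S"
  shows "adj (perm_matrix \<pi>) = perm_matrix (inv \<pi>)"
proof (intro ext)
  fix i j
  have "i = \<pi> j \<longleftrightarrow> j = inv \<pi> i"
    using permutes_inv_eq[OF assms] by metis
  then show "adj (perm_matrix \<pi>) i j = perm_matrix (inv \<pi>) i j"
    by (simp add: adj_def perm_matrix_def)
qed

lemma mmult_perm_matrix_left:
  assumes "\<pi> i < n"
  shows "mmult n (perm_matrix \<pi>) A i j = A (\<pi> i) j"
proof -
  have "mmult n (perm_matrix \<pi>) A i j = (\<Sum>k<n. if k = \<pi> i then A k j else 0)"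
    unfolding mmult_def perm_matrix_def by (intro sum.cong) auto
  then show ?thesis
    using assms by simp
qed

lemma mmult_adj_perm_matrix_right:
  assumes "\<pi> j < n"
  shows "mmult n A (adj (perm_matrix \<pi>)) i j = A i (\<pi> j)"
proof -
  have "mmult n A (adj (perm_matrix \<pi>)) i j = (\<Sum>k<n. if k = \<pi> j then A i k else 0)"
    unfolding mmult_def adj_def perm_matrix_def by (intro sum.cong) auto
  then show ?thesis
    using assms by simp
qed

lemma kraus_apply_perm_matrix:
  assumes "\<pi> permutes {..<n}" "i < n" "j < n"
  shows "kraus_apply n [perm_matrix \<pi>] \<rho> i j = \<rho> (\<pi> i) (\<pi> j)"
  using assms permutes_in_image[OF assms(1)]
  by (simp add: kraus_apply_def mmult_perm_matrix_left mmult_adj_perm_matrix_right)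

lemma cptp_perm_matrix:
  assumes "\<pi> permutes {..<n}"
  shows "cptp_kraus n [perm_matrix \<pi>]"
  unfolding cptp_kraus_def
proof (intro allI impI)
  fix i j assume "i < n" "j < n"
  then have "inv \<pi> i < n"
    using permutes_in_image[OF permutes_inv[OF assms]] by simp
  then have "mmult n (adj (perm_matrix \<pi>)) (perm_matrix \<pi>) i j = perm_matrix \<pi> (inv \<pi> i) j"
    by (simp add: adj_perm_matrix[OF assms] mmult_perm_matrix_left)
  also have "\<dots> = idm i j"
    by (auto simp: perm_matrix_def idm_def permutes_inverses(1)[OF assms])
  finally show "(\<Sum>K\<leftarrow>[perm_matrix \<pi>]. mmult n (adj K) K i j) = idm i j"
    by simp
qed

lemma incoherent_perm_matrix:
  assumes "\<pi> permutes {..<n}"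
  shows "incoherent_kraus n [perm_matrix \<pi>]"
  unfolding incoherent_kraus_def
proof (intro conjI cptp_perm_matrix[OF assms] ballI allI impI)
  fix K \<sigma> assume "K \<in> set [perm_matrix \<pi>]" and \<sigma>: "density n \<sigma> \<and> is_diag n \<sigma>"
  then have K: "K = perm_matrix \<pi>" by simp
  show "is_diag n (mmult n (mmult n K \<sigma>) (adj K))"
    unfolding is_diag_def
  proof (intro allI impI)
    fix i j assume "i < n" "j < n" "i \<noteq> j"
    then have "\<pi> i \<noteq> \<pi> j" "\<pi> i < n" "\<pi> j < n"
      using permutes_inj[OF assms] permutes_in_image[OF assms] by (auto dest: injD)
    then show "mmult n (mmult n K \<sigma>) (adj K) i j = 0"
      using \<sigma> kraus_apply_perm_matrix[OF assms \<open>i < n\<close> \<open>j < n\<close>]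
      by (simp add: K kraus_apply_def is_diag_def)
  qed
qed

lemma psd_2_hermitian:
  assumes "psd 2 A"
  shows "A 1 0 = cnj (A 0 1)"
proof -
  have form: "Im (\<Sum>i<2. \<Sum>j<2. cnj (v i) * A i j * v j) = 0" for v
    using assms unfolding psd_def by blast
  have "Im (A 0 0) = 0"
    using form[of "\<lambda>i. if i = 0 then 1 else 0"] by (simp add: sum_lessThan_2)
  moreover have "Im (A 1 1) = 0"
    using form[of "\<lambda>i. if i = 1 then 1 else 0"] by (simp add: sum_lessThan_2)
  ultimately have "Im (A 0 1) + Im (A 1 0) = 0" "Re (A 0 1) - Re (A 1 0) = 0"
    using form[of "\<lambda>i. 1"] form[of "\<lambda>i. if i = 0 then 1 else \<i>"] by (simp_all add: sum_lessThan_2)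
  then show ?thesis by (simp add: complex_eq_iff)
qed

lemma psd_2I:
  assumes "A 0 0 = of_real a" "A 1 1 = of_real d" "A 1 0 = cnj (A 0 1)"
    and "0 \<le> a" "0 \<le> d" "(cmod (A 0 1))\<^sup>2 \<le> a * d"
  shows "psd 2 A"
  unfolding psd_def
proof (intro allI conjI)
  fix v :: "nat \<Rightarrow> complex"
  define t where "t = cnj (v 0) * A 0 1 * v 1"
  have "(\<Sum>i<2. \<Sum>j<2. cnj (v i) * A i j * v j) =
      of_real a * of_real ((cmod (v 0))\<^sup>2) + of_real d * of_real ((cmod (v 1))\<^sup>2) + (t + cnj t)"
    using assms(1-3)
    by (simp add: sum_lessThan_2 t_def complex_norm_square algebra_simps del: of_real_power)
  also have "\<dots> = of_real (a * (cmod (v 0))\<^sup>2 + d * (cmod (v 1))\<^sup>2 + 2 * Re t)"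
    by (simp add: complex_add_cnj)
  finally have form: "(\<Sum>i<2. \<Sum>j<2. cnj (v i) * A i j * v j) =
      of_real (a * (cmod (v 0))\<^sup>2 + d * (cmod (v 1))\<^sup>2 + 2 * Re t)" .
  show "Im (\<Sum>i<2. \<Sum>j<2. cnj (v i) * A i j * v j) = 0"
    unfolding form by simp
  have "cmod (A 0 1) \<le> sqrt a * sqrt d"
    using assms(4-6) by (simp add: real_le_rsqrt flip: real_sqrt_mult)
  then have "- Re t \<le> sqrt a * cmod (v 0) * (sqrt d * cmod (v 1))"
    using abs_Re_le_cmod[of t] unfolding t_def norm_mult complex_mod_cnj
    by (smt (verit, best) mult.commute mult.left_commute mult_left_mono mult_nonneg_nonneg norm_ge_zero)
  moreover have "0 \<le> (sqrt a * cmod (v 0) - sqrt d * cmod (v 1))\<^sup>2"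
    by simp
  ultimately show "0 \<le> Re (\<Sum>i<2. \<Sum>j<2. cnj (v i) * A i j * v j)"
    unfolding form using assms(4,5) by (simp add: power2_diff power_mult_distrib)
qed

lemma density_2_trace:
  assumes "density 2 \<rho>"
  shows "\<rho> 0 0 + \<rho> 1 1 = 1"
  using assms by (simp add: density_def mtrace_def sum_lessThan_2)

lemma coh_l1_2:
  assumes "A 1 0 = cnj (A 0 1)"
  shows "coh_l1 2 A = 2 * cmod (A 0 1)"
  using assms by (simp add: coh_l1_def sum_lessThan_2)

definition outcome_sign :: "nat \<Rightarrow> real" where
  "outcome_sign x = (if x = 0 then 1 else -1)"

(* For cmod w = 1 this is the projector (1 + s (Re w sigma_x - Im w sigma_y)) / 2 with
   s = outcome_sign x: outcome x of a spin measurement along the equatorial direction w. *)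
definition equatorial_effect :: "complex \<Rightarrow> nat \<Rightarrow> cmat" where
  "equatorial_effect w x = (\<lambda>i j. if i = j then 1/2
     else if i = 0 then of_real (outcome_sign x) * w / 2 else of_real (outcome_sign x) * cnj w / 2)"

lemma psd_equatorial_effect:
  assumes "cmod w = 1"
  shows "psd 2 (equatorial_effect w x)"
  by (rule psd_2I[where a = "1/2" and d = "1/2"])
    (use assms in \<open>auto simp: equatorial_effect_def outcome_sign_def norm_mult norm_divide power2_eq_square\<close>)

lemma qubit_povms_equatorial_effect:
  assumes "\<And>X. cmod (w X) = 1"
  shows "qubit_povms {0,1} {0,1} (\<lambda>X. equatorial_effect (w X))"
  unfolding qubit_povms_def
proof (intro ballI conjI allI impI)
  fix X x show "psd 2 (equatorial_effect (w X) x)"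
    by (rule psd_equatorial_effect[OF assms])
next
  fix X i j :: nat assume "i < 2" "j < 2"
  then show "(\<Sum>x\<in>{0,1}. equatorial_effect (w X) x i j) = idm i j"
    by (auto simp: equatorial_effect_def outcome_sign_def idm_def less_2_cases_iff)
qed

lemma kron_equatorial_effects:
  fixes u v w :: complex and x y z :: nat
  defines "M \<equiv> kron 4 (equatorial_effect u x) (kron 2 (equatorial_effect v y) (equatorial_effect w z))"
  shows "M 0 0 = 1/8" "M 7 7 = 1/8"
    and "M 7 0 = of_real (outcome_sign x * outcome_sign y * outcome_sign z / 8) * cnj (u * v * w)"
    and "M 0 7 = of_real (outcome_sign x * outcome_sign y * outcome_sign z / 8) * (u * v * w)"
  unfolding M_def kron_def equatorial_effect_def by (simp_all add: algebra_simps)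

lemma kron_ket0bra0_ket0bra0:
  "kron 4 \<rho> (kron 2 ket0bra0 ket0bra0) i j =
     (if i mod 4 = 0 \<and> j mod 4 = 0 then \<rho> (i div 4) (j div 4) else 0)"
  unfolding kron_def ket0bra0_def by (auto; presburger)

lemma transpose_4_7_permutes: "transpose 4 7 permutes {..<8::nat}"
  by (simp add: permutes_swap_id)

definition ghz_embedding :: "cmat \<Rightarrow> cmat" where
  "ghz_embedding \<rho> = kraus_apply 8 [perm_matrix (transpose 4 7)] (kron 4 \<rho> (kron 2 ket0bra0 ket0bra0))"

lemma mtrace_ghz_embedding:
  "mtrace 8 (mmult 8 (ghz_embedding \<rho>) M) =
     \<rho> 0 0 * M 0 0 + \<rho> 0 1 * M 7 0 + \<rho> 1 0 * M 0 7 + \<rho> 1 1 * M 7 7"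
  by (simp add: ghz_embedding_def mtrace_def mmult_def sum_lessThan_8 kron_ket0bra0_ket0bra0
      kraus_apply_perm_matrix[OF transpose_4_7_permutes] transpose_def)

lemma qcorr_ghz_embedding_equatorial:
  assumes "\<rho> 1 0 = cnj (\<rho> 0 1)" "\<rho> 0 0 + \<rho> 1 1 = 1"
  shows "qcorr (ghz_embedding \<rho>)
      (\<lambda>X. equatorial_effect (u X)) (\<lambda>Y. equatorial_effect (v Y)) (\<lambda>Z. equatorial_effect (w Z))
      x y z X Y Z =
    1/8 + outcome_sign x * outcome_sign y * outcome_sign z * Re (\<rho> 0 1 * cnj (u X * v Y * w Z)) / 4"
proof -
  define c where "c = \<rho> 0 1 * cnj (u X * v Y * w Z)"
  define s where "s = outcome_sign x * outcome_sign y * outcome_sign z"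
  have "mtrace 8 (mmult 8 (ghz_embedding \<rho>)
      (kron 4 (equatorial_effect (u X) x) (kron 2 (equatorial_effect (v Y) y) (equatorial_effect (w Z) z)))) =
      (\<rho> 0 0 + \<rho> 1 1) / 8 + of_real (s / 8) * (c + cnj c)"
    unfolding mtrace_ghz_embedding kron_equatorial_effects assms(1) c_def s_def
    by (simp add: algebra_simps)
  also have "\<dots> = of_real (1/8 + s * Re c / 4)"
    unfolding assms(2) complex_add_cnj by simp
  finally show ?thesis
    unfolding qcorr_def c_def s_def by simp
qed

definition svetlichny_sign :: "nat \<Rightarrow> real" where
  "svetlichny_sign k = (if k \<le> 1 then 1 else -1)"

definition svetlichny_value :: "(nat \<Rightarrow> nat \<Rightarrow> nat \<Rightarrow> nat \<Rightarrow> nat \<Rightarrow> nat \<Rightarrow> real) \<Rightarrow> real" where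
  "svetlichny_value P = (\<Sum>X\<in>{0,1}. \<Sum>Y\<in>{0,1}. \<Sum>Z\<in>{0,1}. \<Sum>x\<in>{0,1}. \<Sum>y\<in>{0,1}. \<Sum>z\<in>{0,1}.
      svetlichny_sign (X + Y + Z) * (outcome_sign x * outcome_sign y * outcome_sign z) * P x y z X Y Z)"

lemma svetlichny_value_swap_23:
  "svetlichny_value (\<lambda>x y z X Y Z. P x z y X Z Y) = svetlichny_value P"
  by (simp add: svetlichny_value_def svetlichny_sign_def outcome_sign_def)

lemma svetlichny_value_rotate:
  "svetlichny_value (\<lambda>x y z X Y Z. P y z x Y Z X) = svetlichny_value P"
  by (simp add: svetlichny_value_def svetlichny_sign_def outcome_sign_def)

lemma svetlichny_value_cong:
  assumes "\<And>x y z X Y Z. x \<in> {0,1} \<Longrightarrow> y \<in> {0,1} \<Longrightarrow> z \<in> {0,1} \<Longrightarrow>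
      X \<in> {0,1} \<Longrightarrow> Y \<in> {0,1} \<Longrightarrow> Z \<in> {0,1} \<Longrightarrow> P x y z X Y Z = Q x y z X Y Z"
  shows "svetlichny_value P = svetlichny_value Q"
  unfolding svetlichny_value_def using assms by (intro sum.cong refl) auto

lemma svetlichny_value_add:
  "svetlichny_value (\<lambda>x y z X Y Z. P x y z X Y Z + Q x y z X Y Z) = svetlichny_value P + svetlichny_value Q"
  unfolding svetlichny_value_def by (simp add: distrib_left sum.distrib)

lemma svetlichny_value_scale:
  "svetlichny_value (\<lambda>x y z X Y Z. c * P x y z X Y Z) = c * svetlichny_value P"
  unfolding svetlichny_value_def sum_distrib_left by (intro sum.cong refl) (simp add: mult_ac)

lemma svetlichny_value_sum:
  assumes "finite L"
  shows "svetlichny_value (\<lambda>x y z X Y Z. \<Sum>l\<in>L. P l x y z X Y Z) = (\<Sum>l\<in>L. svetlichny_value (P l))"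
  using assms
proof (induction L rule: finite_induct)
  case empty
  then show ?case by (simp add: svetlichny_value_def)
next
  case (insert l L)
  then show ?case
    using svetlichny_value_add[of "P l" "\<lambda>x y z X Y Z. \<Sum>l\<in>L. P l x y z X Y Z"] by simp
qed

lemma svetlichny_value_weighted_sum_le:
  assumes "finite L" "\<And>l. l \<in> L \<Longrightarrow> 0 \<le> q l" "\<And>l. l \<in> L \<Longrightarrow> svetlichny_value (P l) \<le> b"
  shows "svetlichny_value (\<lambda>x y z X Y Z. \<Sum>l\<in>L. q l * P l x y z X Y Z) \<le> b * sum q L"
proof -
  have "svetlichny_value (\<lambda>x y z X Y Z. \<Sum>l\<in>L. q l * P l x y z X Y Z) = (\<Sum>l\<in>L. q l * svetlichny_value (P l))"
    by (simp add: svetlichny_value_sum[OF assms(1)] svetlichny_value_scale)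
  also have "\<dots> \<le> (\<Sum>l\<in>L. q l * b)"
    using assms(2,3) by (intro sum_mono mult_left_mono) auto
  finally show ?thesis
    by (simp add: sum_distrib_left mult.commute)
qed

definition correlator1 :: "(nat \<Rightarrow> nat \<Rightarrow> real) \<Rightarrow> nat \<Rightarrow> real" where
  "correlator1 p X = (\<Sum>x\<in>{0,1}. outcome_sign x * p x X)"

definition correlator2 :: "(nat \<Rightarrow> nat \<Rightarrow> nat \<Rightarrow> nat \<Rightarrow> real) \<Rightarrow> nat \<Rightarrow> nat \<Rightarrow> real" where
  "correlator2 p X Y = (\<Sum>x\<in>{0,1}. \<Sum>y\<in>{0,1}. outcome_sign x * outcome_sign y * p x y X Y)"

lemma abs_correlator1_le:
  assumes "cdist1 {0,1} {0,1} p" "X \<in> {0,1}"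
  shows "\<bar>correlator1 p X\<bar> \<le> 1"
  using assms by (auto simp: cdist1_def correlator1_def outcome_sign_def)

lemma abs_correlator2_le:
  assumes "cdist2 {0,1} {0,1} {0,1} {0,1} p" "X \<in> {0,1}" "Y \<in> {0,1}"
  shows "\<bar>correlator2 p X Y\<bar> \<le> 1"
  using assms by (auto simp: cdist2_def correlator2_def outcome_sign_def)

lemma svetlichny_value_product_le:
  assumes "cdist2 {0,1} {0,1} {0,1} {0,1} p" "cdist1 {0,1} {0,1} q"
  shows "svetlichny_value (\<lambda>x y z X Y Z. p x y X Y * q z Z) \<le> 4"
proof -
  let ?E = "correlator2 p" and ?F = "correlator1 q"
  have mult_le_abs: "f * a \<le> \<bar>a\<bar>" if "\<bar>f\<bar> \<le> 1" for f a :: real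
    using that by (metis abs_ge_self abs_ge_zero abs_mult mult_left_le_one_le order_trans)
  have "svetlichny_value (\<lambda>x y z X Y Z. p x y X Y * q z Z) =
      ?F 0 * (?E 0 0 + ?E 0 1 + ?E 1 0 - ?E 1 1) + ?F 1 * (?E 0 0 - ?E 0 1 - ?E 1 0 - ?E 1 1)"
    by (simp add: svetlichny_value_def svetlichny_sign_def correlator1_def correlator2_def algebra_simps)
  also have "\<dots> \<le> \<bar>?E 0 0 + ?E 0 1 + ?E 1 0 - ?E 1 1\<bar> + \<bar>?E 0 0 - ?E 0 1 - ?E 1 0 - ?E 1 1\<bar>"
    using abs_correlator1_le[OF assms(2)] by (intro add_mono mult_le_abs) auto
  also have "\<dots> \<le> 4"
    using abs_correlator2_le[OF assms(1)] by (smt (verit) insertCI)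
  finally show ?thesis .
qed

lemma svetlichny_value_le_4_if_local:
  assumes "svetlichny_local {0,1} {0,1} {0,1} {0,1} {0,1} {0,1} P"
  shows "svetlichny_value P \<le> 4"
proof -
  let ?B = "{0::nat,1}"
  obtain n1 n2 n3 :: nat and q1 q2 q3 :: "nat \<Rightarrow> real"
    and pxy pxz pyz :: "nat \<Rightarrow> nat \<Rightarrow> nat \<Rightarrow> nat \<Rightarrow> nat \<Rightarrow> real"
    and pz py px :: "nat \<Rightarrow> nat \<Rightarrow> nat \<Rightarrow> real" where
    model1: "\<forall>l<n1. q1 l \<ge> 0 \<and> cdist2 ?B ?B ?B ?B (pxy l) \<and> cdist1 ?B ?B (pz l)" and
    model2: "\<forall>m<n2. q2 m \<ge> 0 \<and> cdist2 ?B ?B ?B ?B (pxz m) \<and> cdist1 ?B ?B (py m)" and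
    model3: "\<forall>k<n3. q3 k \<ge> 0 \<and> cdist2 ?B ?B ?B ?B (pyz k) \<and> cdist1 ?B ?B (px k)" and
    weights: "(\<Sum>l<n1. q1 l) + (\<Sum>m<n2. q2 m) + (\<Sum>k<n3. q3 k) = 1" and
    P: "\<forall>X\<in>?B. \<forall>Y\<in>?B. \<forall>Z\<in>?B. \<forall>x\<in>?B. \<forall>y\<in>?B. \<forall>z\<in>?B.
         P x y z X Y Z =
           (\<Sum>l<n1. q1 l * pxy l x y X Y * pz l z Z) +
           (\<Sum>m<n2. q2 m * pxz m x z X Z * py m y Y) +
           (\<Sum>k<n3. q3 k * pyz k y z Y Z * px k x X)"
    using assms unfolding svetlichny_local_def by (elim exE conjE) (rule that)
  have "svetlichny_value P =
      svetlichny_value (\<lambda>x y z X Y Z. \<Sum>l<n1. q1 l * (pxy l x y X Y * pz l z Z)) +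
      svetlichny_value (\<lambda>x y z X Y Z. \<Sum>m<n2. q2 m * (pxz m x z X Z * py m y Y)) +
      svetlichny_value (\<lambda>x y z X Y Z. \<Sum>k<n3. q3 k * (pyz k y z Y Z * px k x X))"
    unfolding svetlichny_value_add[symmetric]
    by (rule svetlichny_value_cong) (simp add: P[rule_format] mult.assoc)
  also have "\<dots> \<le> 4 * (\<Sum>l<n1. q1 l) + 4 * (\<Sum>m<n2. q2 m) + 4 * (\<Sum>k<n3. q3 k)"
  proof (intro add_mono svetlichny_value_weighted_sum_le finite_lessThan)
    fix l assume "l \<in> {..<n1}"
    then show "svetlichny_value (\<lambda>x y z X Y Z. pxy l x y X Y * pz l z Z) \<le> 4"
      using model1 by (simp add: svetlichny_value_product_le)
  next
    fix m assume "m \<in> {..<n2}"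
    then show "svetlichny_value (\<lambda>x y z X Y Z. pxz m x z X Z * py m y Y) \<le> 4"
      using model2 svetlichny_value_swap_23[of "\<lambda>x y z X Y Z. pxz m x y X Y * py m z Z"]
      by (simp add: svetlichny_value_product_le)
  next
    fix k assume "k \<in> {..<n3}"
    then show "svetlichny_value (\<lambda>x y z X Y Z. pyz k y z Y Z * px k x X) \<le> 4"
      using model3 svetlichny_value_rotate[of "\<lambda>x y z X Y Z. pyz k x y X Y * px k z Z"]
      by (simp add: svetlichny_value_product_le)
  qed (use model1 model2 model3 in auto)
  also have "\<dots> = 4"
    using weights by simp
  finally show ?thesis .
qed

lemma genuinely_3q_nonlocal_if_svetlichny_violation:
  assumes "qubit_povms {0,1} {0,1} E1" "qubit_povms {0,1} {0,1} E2" "qubit_povms {0,1} {0,1} E3"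
    and "svetlichny_value (qcorr \<rho> E1 E2 E3) > 4"
  shows "genuinely_3q_nonlocal \<rho>"
  unfolding genuinely_3q_nonlocal_def
proof (intro exI conjI)
  show "\<not> svetlichny_local {0,1} {0,1} {0,1} {0,1} {0,1} {0,1} (qcorr \<rho> E1 E2 E3)"
    using assms(4) svetlichny_value_le_4_if_local by fastforce
qed (use assms(1-3) in simp_all)

definition svetlichny_phase_A :: "nat \<Rightarrow> complex" where
  "svetlichny_phase_A X = (if X = 0 then 1 + \<i> else 1 - \<i>) / of_real (sqrt 2)"

definition svetlichny_phase_B :: "nat \<Rightarrow> complex" where
  "svetlichny_phase_B Y = (if Y = 0 then 1 else - \<i>)"

lemma norm_svetlichny_phase_A: "cmod (svetlichny_phase_A X) = 1"
  by (simp add: svetlichny_phase_A_def norm_divide cmod_def power_divide)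

lemma norm_svetlichny_phase_B: "cmod (svetlichny_phase_B Y) = 1"
  by (simp add: svetlichny_phase_B_def)

lemma Re_cnj_svetlichny_phases:
  assumes "X \<in> {0,1}" "Y \<in> {0,1}" "Z \<in> {0,1}"
  shows "Re (cnj (svetlichny_phase_A X * svetlichny_phase_B Y * svetlichny_phase_B Z)) =
    svetlichny_sign (X + Y + Z) / sqrt 2"
  using assms by (auto simp: svetlichny_phase_A_def svetlichny_phase_B_def svetlichny_sign_def)

lemma svetlichny_value_ghz_type:
  "svetlichny_value (\<lambda>x y z X Y Z.
     1/8 + outcome_sign x * outcome_sign y * outcome_sign z * (K * svetlichny_sign (X + Y + Z)) / 4) = 16 * K"
  by (simp add: svetlichny_value_def outcome_sign_def svetlichny_sign_def algebra_simps)

lemma svetlichny_value_ghz_embedding: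
  assumes "density 2 \<rho>"
  shows "svetlichny_value
      (qcorr (ghz_embedding \<rho>)
        (\<lambda>X. equatorial_effect (sgn (\<rho> 0 1) * svetlichny_phase_A X))
        (\<lambda>Y. equatorial_effect (svetlichny_phase_B Y)) (\<lambda>Z. equatorial_effect (svetlichny_phase_B Z)))
    = 4 * sqrt 2 * coh_l1 2 \<rho>"
    (is "svetlichny_value ?P = _")
proof -
  define c where "c = \<rho> 0 1"
  have herm: "\<rho> 1 0 = cnj (\<rho> 0 1)"
    using assms psd_2_hermitian by (simp add: density_def)
  have c_cnj_sgn: "c * cnj (sgn c) = of_real (cmod c)"
  proof -
    have "c * cnj (sgn c) = of_real ((cmod c)\<^sup>2) / of_real (cmod c)"
      by (simp add: sgn_eq complex_norm_square del: of_real_power)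
    then show ?thesis
      by (simp add: power2_eq_square)
  qed
  have correlations: "?P x y z X Y Z =
      1/8 + outcome_sign x * outcome_sign y * outcome_sign z * ((cmod c / sqrt 2) * svetlichny_sign (X + Y + Z)) / 4"
    if "x \<in> {0,1}" "y \<in> {0,1}" "z \<in> {0,1}" "X \<in> {0,1}" "Y \<in> {0,1}" "Z \<in> {0,1}" for x y z X Y Z
  proof -
    let ?W = "svetlichny_phase_A X * svetlichny_phase_B Y * svetlichny_phase_B Z"
    have "Re (c * cnj (sgn c * svetlichny_phase_A X * svetlichny_phase_B Y * svetlichny_phase_B Z)) =
        Re (of_real (cmod c) * cnj ?W)"
      unfolding c_cnj_sgn[symmetric] complex_cnj_mult by (simp only: mult_ac)
    also have "\<dots> = cmod c * Re (cnj ?W)"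
      by simp
    finally show ?thesis
      using that Re_cnj_svetlichny_phases
      by (simp add: qcorr_ghz_embedding_equatorial[OF herm density_2_trace[OF assms]] c_def)
  qed
  have "svetlichny_value ?P = svetlichny_value (\<lambda>x y z X Y Z.
      1/8 + outcome_sign x * outcome_sign y * outcome_sign z * ((cmod c / sqrt 2) * svetlichny_sign (X + Y + Z)) / 4)"
    by (rule svetlichny_value_cong) (rule correlations)
  also have "\<dots> = 16 * (cmod c / sqrt 2)"
    by (rule svetlichny_value_ghz_type)
  also have "\<dots> = 4 * sqrt 2 * coh_l1 2 \<rho>"
    by (simp add: coh_l1_2[OF herm] c_def field_simps)
  finally show ?thesis .
qed

theorem theorem5:
  fixes \<rho>s :: cmat
  assumes "density 2 \<rho>s"
    and "coh_l1 2 \<rho>s > sqrt (1/2)"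
  shows "\<exists>Ks. incoherent_kraus 8 Ks \<and>
           genuinely_3q_nonlocal (kraus_apply 8 Ks (kron 4 \<rho>s (kron 2 ket0bra0 ket0bra0)))"
proof (intro exI conjI)
  show "incoherent_kraus 8 [perm_matrix (transpose 4 7)]"
    by (rule incoherent_perm_matrix[OF transpose_4_7_permutes])
  define EA where "EA = (\<lambda>X. equatorial_effect (sgn (\<rho>s 0 1) * svetlichny_phase_A X))"
  define EB where "EB = (\<lambda>Y. equatorial_effect (svetlichny_phase_B Y))"
  have "\<rho>s 0 1 \<noteq> 0"
    using assms psd_2_hermitian coh_l1_2 by (force simp: density_def)
  then have "qubit_povms {0,1} {0,1} EA"
    unfolding EA_def
    by (intro qubit_povms_equatorial_effect) (simp add: norm_mult norm_sgn norm_svetlichny_phase_A)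
  moreover have "qubit_povms {0,1} {0,1} EB"
    unfolding EB_def by (intro qubit_povms_equatorial_effect norm_svetlichny_phase_B)
  moreover have "4 < svetlichny_value (qcorr (ghz_embedding \<rho>s) EA EB EB)"
  proof -
    have "4 = 4 * sqrt 2 * sqrt (1/2)"
      by (simp flip: real_sqrt_mult)
    also have "\<dots> < 4 * sqrt 2 * coh_l1 2 \<rho>s"
      using assms(2) by (intro mult_strict_left_mono) auto
    finally show ?thesis
      unfolding EA_def EB_def svetlichny_value_ghz_embedding[OF assms(1)] .
  qed
  ultimately have "genuinely_3q_nonlocal (ghz_embedding \<rho>s)"
    by (intro genuinely_3q_nonlocal_if_svetlichny_violation)
  then show "genuinely_3q_nonlocal
      (kraus_apply 8 [perm_matrix (transpose 4 7)] (kron 4 \<rho>s (kron 2 ket0bra0 ket0bra0)))"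
    by (simp only: ghz_embedding_def)
qed

end
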